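(* Let $v_1\ge v_2>0$ and $b\in(0,1)$. A strategy profile $(X,Y)$ with $\mathbf{E}(X)=1$ and $\mathbf{E}(Y)=b$ is a Nash equilibrium of the discrete all-pay auction with valuations $v_1,v_2$ if and only if $v_2=2$, $b\in(0,4/v_1]$, $X=U_{\mathrm{O}}^1$ and $Y=(1-b)\delta_0+b\big(\lambda U_{\mathrm{O}}^1+(1-\lambda)U_{\mathrm{E}}^1\big)$ for some $\lambda\in[0,1]$ with $\frac{4}{bv_1}-\frac{2}{b}+1\le\lambda\le\frac{4}{bv_1}-1$. In this case $P^1(X,Y)=\frac{v_1}{2}(2-b)-1$ and $P^2(Y,X)=0$.
   Context: Discrete all-pay auction: two players, 1 and 2, value a prize at $v_1$ and $v_2$ respectively, where $v_1\ge v_2>0$. A (mixed) strategy is a probability distribution on $\mathbb{Z}_{\ge 0}$ with finite mean, identified with a $\mathbb{Z}_{\ge0}$-valued random variable; the two players' choices are independent. If player 1 uses $X$ and player 2 uses $Y$, the expected payoffs are $P^1(X,Y)=v_1\Pr(X>Y)+\frac{v_1}{2}\Pr(X=Y)-\mathbf{E}(X)$ and $P^2(Y,X)=v_2\Pr(Y>X)+\frac{v_2}{2}\Pr(X=Y)-\mathbf{E}(Y)$. A Nash equilibrium of the all-pay auction is a pair $(X,Y)$ with $P^1(X,Y)\ge P^1(X',Y)$ and $P^2(Y,X)\ge P^2(Y',X)$ for all strategies $X',Y'$. $\delta_j$ denotes the point mass at $j$; $\lambda A+(1-\lambda)B$ denotes the mixture of distributions $A$ and $B$. Special distributions: $U_{\mathrm{O}}^1=\delta_1$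 (uniform on $\{1\}$) and $U_{\mathrm{E}}^1$ is the uniform distribution on $\{0,2\}$. *)

theory Defs
  imports "HOL-Probability.Probability"
begin

definition is_strategy :: "nat pmf \<Rightarrow> bool" where
  "is_strategy X \<longleftrightarrow> integrable (measure_pmf X) real"

definition mean :: "nat pmf \<Rightarrow> real" where
  "mean X = measure_pmf.expectation X real"

definition payoff :: "real \<Rightarrow> nat pmf \<Rightarrow> nat pmf \<Rightarrow> real" where
  "payoff v X Y =
     v * measure_pmf.prob (pair_pmf X Y) {(x, y). x > y}
     + v / 2 * measure_pmf.prob (pair_pmf X Y) {(x, y). x = y}
     - mean X"

definition nash :: "real \<Rightarrow> real \<Rightarrow> nat pmf \<Rightarrow> nat pmf \<Rightarrow> bool" where
  "nash v1 v2 X Y \<longleftrightarrow> is_strategy X \<and> is_strategy Y \<and>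
     (\<forall>X'. is_strategy X' \<longrightarrow> payoff v1 X' Y \<le> payoff v1 X Y) \<and>
     (\<forall>Y'. is_strategy Y' \<longrightarrow> payoff v2 Y' X \<le> payoff v2 Y X)"

definition mix :: "real \<Rightarrow> 'a pmf \<Rightarrow> 'a pmf \<Rightarrow> 'a pmf" where
  "mix lam A B = bind_pmf (bernoulli_pmf lam) (\<lambda>c. if c then A else B)"

definition U_O1 :: "nat pmf" where "U_O1 = return_pmf 1"
definition U_E1 :: "nat pmf" where "U_E1 = pmf_of_set {0, 2}"

end

theory Submission
  imports Defs
begin

text \<open>By the indifference principle, every bid in the support of an equilibrium strategy earns the
  equilibrium payoff and no bid earns more. If player 1 bid 0, indifference between 0 and some
  bid \<open>\<ge> 2\<close> (which mean 1 requires), together with the unprofitable deviation to 1, forces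
  \<open>2 P(Y = 0) + P(Y = 1) \<le> 1\<close> and hence \<open>E Y \<ge> 1\<close>; so \<open>X \<ge> 1\<close> almost surely and, having
  mean 1, \<open>X = \<delta>\<^sub>1\<close>. Against \<open>\<delta>\<^sub>1\<close> the bids 0, 1 and \<open>k \<ge> 2\<close> earn \<open>0\<close>, \<open>v\<^sub>2/2 - 1\<close> and \<open>v\<^sub>2 - k\<close>.
  Player 2 must bid 0 (as \<open>E Y < 1\<close>) and some positive amount, which forces \<open>v\<^sub>2 = 2\<close> and
  support in \<open>{0, 1, 2}\<close>. Such a \<open>Y\<close> with mean \<open>b\<close> is the stated mixture with
  \<open>\<lambda> = P(Y = 1) / b\<close>, and the two bounds on \<open>\<lambda>\<close> say exactly that the bids 0 and 2 do not beat
  the bid 1 for player 1.\<close>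

definition bid_payoff :: "real \<Rightarrow> nat pmf \<Rightarrow> nat \<Rightarrow> real" where
  "bid_payoff v Y k = v * (measure_pmf.prob Y {..<k} + pmf Y k / 2) - real k"

lemma bid_payoff_sum: "bid_payoff v Y k = v * (sum (pmf Y) {..<k} + pmf Y k / 2) - real k"
  unfolding bid_payoff_def by (simp add: measure_measure_pmf_finite)

lemma bid_payoff_return_pmf:
  "bid_payoff v (return_pmf j) k = (if k < j then 0 else if k = j then v / 2 else v) - real k"
  by (simp add: bid_payoff_def indicator_def)

lemma bid_payoff_above_support:
  assumes "set_pmf Y \<subseteq> {..<k}"
  shows "bid_payoff v Y k = v - real k"
proof -
  have "measure_pmf.prob Y {..<k} = 1"
    using assms by (subst measure_pmf.prob_eq_1) (auto simp: AE_measure_pmf_iff)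
  moreover have "pmf Y k = 0"
    using assms by (auto simp: set_pmf_iff)
  ultimately show ?thesis
    by (simp add: bid_payoff_def)
qed

lemma bid_payoff_le:
  assumes "v \<ge> 0"
  shows "bid_payoff v Y k \<le> v - real k"
proof -
  have "sum (pmf Y) {..<k} + pmf Y k = measure_pmf.prob Y {..k}"
    by (simp add: lessThan_Suc_atMost[symmetric] measure_measure_pmf_finite)
  also have "\<dots> \<le> 1"
    by simp
  finally have "sum (pmf Y) {..<k} + pmf Y k / 2 \<le> 1"
    using pmf_nonneg[of Y k] by linarith
  then show ?thesis
    unfolding bid_payoff_sum using assms by (simp add: mult_left_le)
qed

lemma integrable_bid_payoff:
  assumes "is_strategy X"
  shows "integrable X (bid_payoff v Y)"
proof -
  have "integrable X (\<lambda>x. measure_pmf.prob Y {..<x})" "integrable X (pmf Y)"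
    by (auto intro!: measure_pmf.integrable_const_bound[where B = 1] simp: pmf_le_1)
  then show ?thesis
    using assms unfolding bid_payoff_def is_strategy_def by auto
qed

lemma prob_pair_pmf:
  "measure_pmf.prob (pair_pmf X Y) A =
     measure_pmf.expectation X (\<lambda>x. measure_pmf.prob Y {y. (x, y) \<in> A})"
proof -
  have "measure_pmf.prob (pair_pmf X Y) A =
      measure (measure_pmf X \<bind> (\<lambda>x. measure_pmf (map_pmf (Pair x) Y))) A"
    by (simp add: pair_pmf_def map_pmf_def measure_pmf_bind)
  also have "\<dots> = measure_pmf.expectation X (\<lambda>x. measure_pmf.prob (map_pmf (Pair x) Y) A)"
    by (rule measure_pmf.measure_bind[where N = "count_space UNIV"])
       (auto simp: measure_pmf_in_subprob_algebra)
  finally show ?thesis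
    by (simp add: measure_map_pmf vimage_def)
qed

lemma payoff_eq_expectation_bid_payoff:
  assumes "is_strategy X"
  shows "payoff v X Y = measure_pmf.expectation X (bid_payoff v Y)"
proof -
  have win: "measure_pmf.prob (pair_pmf X Y) {(x, y). x > y} =
      measure_pmf.expectation X (\<lambda>x. measure_pmf.prob Y {..<x})"
    unfolding prob_pair_pmf by (rule Bochner_Integration.integral_cong) (auto simp: lessThan_def)
  have tie: "measure_pmf.prob (pair_pmf X Y) {(x, y). x = y} = measure_pmf.expectation X (pmf Y)"
    unfolding prob_pair_pmf measure_pmf_single[symmetric]
    by (rule Bochner_Integration.integral_cong) auto
  have "integrable X (\<lambda>x. measure_pmf.prob Y {..<x})" "integrable X (pmf Y)"
    by (auto intro!: measure_pmf.integrable_const_bound[where B = 1] simp: pmf_le_1)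
  moreover have "integrable X real"
    using assms by (simp add: is_strategy_def)
  ultimately show ?thesis
    unfolding payoff_def win tie mean_def bid_payoff_def by (simp add: algebra_simps)
qed

lemma is_strategy_return_pmf: "is_strategy (return_pmf k)"
  unfolding is_strategy_def by (rule integrable_measure_pmf_finite) simp

lemma payoff_return_pmf: "payoff v (return_pmf k) Y = bid_payoff v Y k"
  by (simp add: payoff_eq_expectation_bid_payoff is_strategy_return_pmf)

lemma best_response_iff_no_better_bid:
  assumes "is_strategy X"
  shows "(\<forall>X'. is_strategy X' \<longrightarrow> payoff v X' Y \<le> payoff v X Y) \<longleftrightarrow>
         (\<forall>k. bid_payoff v Y k \<le> payoff v X Y)"
proof
  assume "\<forall>X'. is_strategy X' \<longrightarrow> payoff v X' Y \<le> payoff v X Y"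
  then show "\<forall>k. bid_payoff v Y k \<le> payoff v X Y"
    by (metis is_strategy_return_pmf payoff_return_pmf)
next
  assume le: "\<forall>k. bid_payoff v Y k \<le> payoff v X Y"
  show "\<forall>X'. is_strategy X' \<longrightarrow> payoff v X' Y \<le> payoff v X Y"
  proof (intro allI impI)
    fix X' assume X': "is_strategy X'"
    have "measure_pmf.expectation X' (bid_payoff v Y) \<le> measure_pmf.expectation X' (\<lambda>_. payoff v X Y)"
      using integrable_bid_payoff[OF X'] le by (intro integral_mono) auto
    then show "payoff v X' Y \<le> payoff v X Y"
      by (simp add: payoff_eq_expectation_bid_payoff[OF X'])
  qed
qed

lemma nash_iff_no_better_bid:
  "nash v1 v2 X Y \<longleftrightarrow> is_strategy X \<and> is_strategy Y \<and>
     (\<forall>k. bid_payoff v1 Y k \<le> payoff v1 X Y) \<and> (\<forall>k. bid_payoff v2 X k \<le> payoff v2 Y X)"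
  unfolding nash_def
  using best_response_iff_no_better_bid[of X v1 Y] best_response_iff_no_better_bid[of Y v2 X]
  by blast

lemma payoff_eq_if_bid_payoff_eq_on_support:
  assumes "is_strategy X" and "\<And>k. k \<in> set_pmf X \<Longrightarrow> bid_payoff v Y k = u"
  shows "payoff v X Y = u"
proof -
  have "measure_pmf.expectation X (bid_payoff v Y) = measure_pmf.expectation X (\<lambda>_. u)"
    using assms(2) by (intro integral_cong_AE) (auto simp: AE_measure_pmf_iff)
  then show ?thesis
    by (simp add: payoff_eq_expectation_bid_payoff[OF assms(1)])
qed

lemma bid_payoff_eq_payoff_on_support:
  assumes X: "is_strategy X" and le: "\<And>k. bid_payoff v Y k \<le> payoff v X Y"
    and k: "k \<in> set_pmf X"
  shows "bid_payoff v Y k = payoff v X Y"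
proof -
  let ?gap = "\<lambda>x. payoff v X Y - bid_payoff v Y x"
  have int: "integrable X ?gap"
    using integrable_bid_payoff[OF X] by auto
  have "measure_pmf.expectation X ?gap = 0"
    using integrable_bid_payoff[OF X]
    by (simp add: Bochner_Integration.integral_diff payoff_eq_expectation_bid_payoff[OF X])
  then have "AE x in X. ?gap x = 0"
    using integral_nonneg_eq_0_iff_AE[OF int] le by (simp add: AE_measure_pmf_iff)
  then show ?thesis
    using k by (simp add: AE_measure_pmf_iff)
qed

lemma mean_ge_2_minus_pmf:
  assumes "is_strategy Y"
  shows "2 - 2 * pmf Y 0 - pmf Y 1 \<le> mean Y"
proof -
  let ?f = "\<lambda>y::nat. 2 - 2 * indicator {0} y - indicator {1} y :: real"
  have "measure_pmf.expectation Y ?f = 2 - 2 * pmf Y 0 - pmf Y 1"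
    by (simp add: measure_pmf_single[symmetric] measure_pmf.emeasure_eq_measure)
  moreover have "measure_pmf.expectation Y ?f \<le> measure_pmf.expectation Y real"
  proof (rule integral_mono)
    show "integrable Y ?f"
      by (rule measure_pmf.integrable_const_bound[where B = 2]) (auto simp: indicator_def)
    show "integrable Y real"
      using assms unfolding is_strategy_def .
  qed (auto simp: indicator_def)
  ultimately show ?thesis
    by (simp add: mean_def)
qed

lemma pmf_0_pos_if_mean_less_1:
  assumes "is_strategy Y" and "mean Y < 1"
  shows "pmf Y 0 > 0"
proof -
  have "pmf Y 0 + pmf Y 1 \<le> 1"
    using measure_pmf.prob_le_1[of Y "{0, 1}"] by (simp add: measure_measure_pmf_finite)
  then show ?thesis
    using mean_ge_2_minus_pmf[OF assms(1)] assms(2) by linarith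
qed

lemma eq_return_pmf_1_if_mean_1:
  assumes X: "is_strategy X" and "pmf X 0 = 0" and "mean X = 1"
  shows "X = return_pmf 1"
proof -
  have int: "integrable X (\<lambda>x. real x - 1)"
    using X unfolding is_strategy_def by auto
  have "AE x in X. 0 \<le> real x - 1"
    using assms(2) by (auto simp: AE_measure_pmf_iff set_pmf_iff) (metis Suc_leI gr0I)
  moreover have "measure_pmf.expectation X (\<lambda>x. real x - 1) = 0"
    using X assms(3) unfolding is_strategy_def mean_def by (simp add: Bochner_Integration.integral_diff)
  ultimately have "AE x in X. real x - 1 = 0"
    using integral_nonneg_eq_0_iff_AE[OF int] by simp
  then have "set_pmf X \<subseteq> {1}"
    by (auto simp: AE_measure_pmf_iff)
  then show ?thesis
    by (simp add: set_pmf_subset_singleton)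
qed

lemma exists_ge_2_in_support_if_mean_1:
  assumes "pmf X 0 > 0" and "mean X = 1"
  obtains M where "M \<in> set_pmf X" and "M \<ge> 2"
proof (rule ccontr)
  assume "\<not> thesis"
  with that have sub: "set_pmf X \<subseteq> {0, 1}"
    by force
  have "pmf X 0 + pmf X 1 = 1"
    using sum_pmf_eq_1[OF _ sub] by simp
  moreover have "mean X = pmf X 1"
    unfolding mean_def by (subst integral_measure_pmf_real[of "{0, 1}"]) (use sub in auto)
  ultimately show False
    using assms by simp
qed

lemma nash_pmf_0_eq_0:
  assumes N: "nash v1 v2 X Y" and v1: "v1 > 0" and "mean X = 1" and "mean Y < 1"
  shows "pmf X 0 = 0"
proof (rule ccontr)
  assume "pmf X 0 \<noteq> 0"
  then have X0: "pmf X 0 > 0" "0 \<in> set_pmf X"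
    by (simp_all add: pmf_nonneg set_pmf_iff order_less_le)
  obtain M where M: "M \<in> set_pmf X" "M \<ge> 2"
    using exists_ge_2_in_support_if_mean_1 X0(1) assms(3) by blast
  from N have X: "is_strategy X" and Y: "is_strategy Y"
    and le: "\<And>k. bid_payoff v1 Y k \<le> payoff v1 X Y"
    by (auto simp: nash_iff_no_better_bid)
  define c0 c1 c2 where "c0 = pmf Y 0" and "c1 = pmf Y 1" and "c2 = pmf Y 2"
  have nn: "c0 \<ge> 0" "c1 \<ge> 0" "c2 \<ge> 0"
    by (simp_all add: c0_def c1_def c2_def)
  have total: "c0 + c1 + c2 \<le> 1"
    using measure_pmf.prob_le_1[of Y "{0, 1, 2}"]
    by (simp add: measure_measure_pmf_finite c0_def c1_def c2_def)
  have at0: "payoff v1 X Y = v1 * c0 / 2"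
    using bid_payoff_eq_payoff_on_support[OF X le X0(2)] by (simp add: bid_payoff_sum c0_def)
  have dev1: "v1 * (c0 + c1) \<le> 2"
    using le[of 1] at0 by (simp add: bid_payoff_sum c0_def c1_def algebra_simps)
  have atM: "bid_payoff v1 Y M = v1 * c0 / 2"
    using bid_payoff_eq_payoff_on_support[OF X le M(1)] at0 by simp
  have "2 * c0 + c1 \<le> 1"
  proof (cases "M = 2")
    case True
    have "bid_payoff v1 Y 2 = v1 * (c0 + c1 + c2 / 2) - 2"
      by (simp add: bid_payoff_sum numeral_2_eq_2 lessThan_Suc c0_def c1_def c2_def add_ac)
    with True atM have "v1 * (c0 + c1 + c2 / 2) - 2 = v1 * c0 / 2"
      by simp
    with dev1 have "v1 * c0 \<le> v1 * c2"
      by (simp add: algebra_simps)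
    then show ?thesis
      using v1 total by simp
  next
    case False
    from False M(2) atM bid_payoff_le[of v1 Y M] v1 have deep: "3 \<le> v1 * (1 - c0 / 2)"
      by (simp add: algebra_simps)
    have "(c0 + c1) * 3 \<le> (c0 + c1) * (v1 * (1 - c0 / 2))"
      using deep nn by (intro mult_left_mono) auto
    also have "\<dots> = (1 - c0 / 2) * (v1 * (c0 + c1))"
      by (simp add: algebra_simps)
    also have "\<dots> \<le> (1 - c0 / 2) * 2"
      using dev1 total nn by (intro mult_left_mono) auto
    finally show ?thesis
      using nn by (simp add: algebra_simps)
  qed
  then show False
    using mean_ge_2_minus_pmf[OF Y] assms(4) by (simp add: c0_def c1_def)
qed

lemma nash_against_return_pmf_1:
  assumes N: "nash v1 v2 (return_pmf 1) Y" and "0 < mean Y" and "mean Y < 1"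
  shows "v2 = 2" and "set_pmf Y \<subseteq> {..2}"
proof -
  let ?u = "payoff v2 Y (return_pmf 1)"
  from N have Y: "is_strategy Y" and le: "\<And>k. bid_payoff v2 (return_pmf 1) k \<le> ?u"
    by (auto simp: nash_iff_no_better_bid)
  have eq: "bid_payoff v2 (return_pmf 1) k = ?u" if "k \<in> set_pmf Y" for k
    using bid_payoff_eq_payoff_on_support[OF Y le that] .
  have "0 \<in> set_pmf Y"
    using pmf_0_pos_if_mean_less_1[OF Y assms(3)] by (simp add: set_pmf_iff)
  then have u: "?u = 0"
    using eq by (fastforce simp: bid_payoff_return_pmf)
  obtain j where j: "j \<in> set_pmf Y" "j \<ge> 1"
  proof (rule ccontr)
    assume "\<not> thesis"
    with that have "set_pmf Y \<subseteq> {0}"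
      by force
    then show False
      using assms(2) by (simp add: set_pmf_subset_singleton mean_def)
  qed
  have "v2 \<le> 2"
    using le[of 1] u by (simp add: bid_payoff_return_pmf)
  moreover have "v2 = (if j = 1 then 2 else real j)"
    using eq[OF j(1)] u j(2) by (auto simp: bid_payoff_return_pmf split: if_splits)
  ultimately show v2: "v2 = 2"
    using j(2) by (auto split: if_splits)
  have "k \<le> 2" if "k \<in> set_pmf Y" for k
    using eq[OF that] u v2 by (auto simp: bid_payoff_return_pmf split: if_splits)
  then show "set_pmf Y \<subseteq> {..2}"
    by auto
qed

lemma pmf_mix:
  assumes "0 \<le> lam" and "lam \<le> 1"
  shows "pmf (mix lam A B) k = lam * pmf A k + (1 - lam) * pmf B k"
  using assms unfolding mix_def by (simp add: pmf_bind)

definition response_mix :: "real \<Rightarrow> real \<Rightarrow> nat pmf" where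
  "response_mix b lam = mix (1 - b) (return_pmf 0) (mix lam U_O1 U_E1)"

lemma pmf_response_mix:
  assumes "0 \<le> b" "b \<le> 1" "0 \<le> lam" "lam \<le> 1"
  shows "pmf (response_mix b lam) k =
    (if k = 0 then 1 - b * (1 + lam) / 2 else if k = 1 then b * lam
     else if k = 2 then b * (1 - lam) / 2 else 0)"
  using assms by (auto simp: response_mix_def pmf_mix U_O1_def U_E1_def indicator_def field_simps)

lemma set_pmf_response_mix:
  assumes "0 \<le> b" "b \<le> 1" "0 \<le> lam" "lam \<le> 1"
  shows "set_pmf (response_mix b lam) \<subseteq> {..2}"
  using pmf_response_mix[OF assms] by (auto simp: set_pmf_iff split: if_splits)

lemma response_mix_if_support_le_2:
  assumes sub: "set_pmf Y \<subseteq> {..2}" and "0 < mean Y" and "mean Y < 1"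
  defines "lam \<equiv> pmf Y 1 / mean Y"
  shows "0 \<le> lam" and "lam \<le> 1" and "Y = response_mix (mean Y) lam"
proof -
  have total: "pmf Y 0 + pmf Y 1 + pmf Y 2 = 1"
    using sum_pmf_eq_1[OF _ sub] by (simp add: atMost_nat_numeral)
  have m: "mean Y = pmf Y 1 + 2 * pmf Y 2"
    unfolding mean_def by (subst integral_measure_pmf_real[of "{0, 1, 2}"]) (use sub in auto)
  then show l0: "0 \<le> lam" and l1: "lam \<le> 1"
    using assms(2) by (auto simp: lam_def)
  have blam: "mean Y * lam = pmf Y 1"
    using assms(2) by (simp add: lam_def)
  show "Y = response_mix (mean Y) lam"
  proof (rule pmf_eqI)
    fix k
    have "pmf Y k = 0" if "k > 2"
      using sub that by (auto simp: set_pmf_iff)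
    then show "pmf Y k = pmf (response_mix (mean Y) lam) k"
      using total m blam l0 l1 assms(2,3)
      by (auto simp: pmf_response_mix field_simps)
  qed
qed

lemma bid_payoff_response_mix:
  assumes "0 \<le> b" "b \<le> 1" "0 \<le> lam" "lam \<le> 1"
  shows "bid_payoff v (response_mix b lam) k =
    (if k = 0 then v * (2 - b - b * lam) / 4 else if k = 1 then v * (2 - b) / 2 - 1
     else if k = 2 then v * (4 - b + b * lam) / 4 - 2 else v - real k)"
proof -
  consider "k = 0" | "k = 1" | "k = 2" | "k \<ge> 3"
    by linarith
  then show ?thesis
  proof cases
    case 4
    then have "set_pmf (response_mix b lam) \<subseteq> {..<k}"
      using set_pmf_response_mix[OF assms] by auto
    with 4 show ?thesis
      by (simp add: bid_payoff_above_support)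
  qed (use assms in \<open>simp_all add: bid_payoff_sum pmf_response_mix numeral_2_eq_2
                                 lessThan_Suc field_simps\<close>)
qed

lemma bid_1_best_response_to_response_mix_iff:
  assumes b: "0 < b" "b \<le> 1" and lam: "0 \<le> lam" "lam \<le> 1" and v: "v > 0"
  shows "(\<forall>k. bid_payoff v (response_mix b lam) k \<le> bid_payoff v (response_mix b lam) 1) \<longleftrightarrow>
         4 / (b * v) - 2 / b + 1 \<le> lam \<and> lam \<le> 4 / (b * v) - 1"
proof -
  have bv: "b * v > 0"
    using b v by simp
  have lo: "4 / (b * v) - 2 / b + 1 \<le> lam \<longleftrightarrow> 4 \<le> v * (2 - b + b * lam)"
    using b v bv by (simp add: field_simps)
  have hi: "lam \<le> 4 / (b * v) - 1 \<longleftrightarrow> v * b * (1 + lam) \<le> 4"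
    using bv by (simp add: field_simps)
  show ?thesis
    unfolding lo hi
  proof
    assume "\<forall>k. bid_payoff v (response_mix b lam) k \<le> bid_payoff v (response_mix b lam) 1"
    from this[rule_format, of 0] this[rule_format, of 2]
    show "4 \<le> v * (2 - b + b * lam) \<and> v * b * (1 + lam) \<le> 4"
      using b lam by (simp add: bid_payoff_response_mix field_simps)
  next
    assume bounds: "4 \<le> v * (2 - b + b * lam) \<and> v * b * (1 + lam) \<le> 4"
    moreover have "v * b \<le> v * b * (1 + lam)"
      using mult_left_mono[of 1 "1 + lam" "v * b"] bv lam by (simp add: mult.commute)
    ultimately show "\<forall>k. bid_payoff v (response_mix b lam) k \<le> bid_payoff v (response_mix b lam) 1"
      using b lam by (auto simp: bid_payoff_response_mix field_simps)
  qed
qed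

lemma nash_response_mix:
  assumes b: "0 < b" "b \<le> 1" and lam: "0 \<le> lam" "lam \<le> 1" and v1: "v1 > 0"
    and bounds: "4 / (b * v1) - 2 / b + 1 \<le> lam" "lam \<le> 4 / (b * v1) - 1"
  shows "nash v1 2 (return_pmf 1) (response_mix b lam)
    \<and> payoff v1 (return_pmf 1) (response_mix b lam) = v1 / 2 * (2 - b) - 1
    \<and> payoff 2 (response_mix b lam) (return_pmf 1) = 0"
proof -
  have sub: "set_pmf (response_mix b lam) \<subseteq> {..2}"
    using set_pmf_response_mix b lam by simp
  then have Y: "is_strategy (response_mix b lam)"
    unfolding is_strategy_def by (intro integrable_measure_pmf_finite) (auto intro: finite_subset)
  have u1: "payoff v1 (return_pmf 1) (response_mix b lam) = v1 / 2 * (2 - b) - 1"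
    using b lam by (simp add: payoff_return_pmf bid_payoff_response_mix algebra_simps)
  have u2: "payoff 2 (response_mix b lam) (return_pmf 1) = 0"
    using sub by (intro payoff_eq_if_bid_payoff_eq_on_support[OF Y])
                 (auto simp: bid_payoff_return_pmf)
  have "\<forall>k. bid_payoff v1 (response_mix b lam) k \<le> payoff v1 (return_pmf 1) (response_mix b lam)"
    using bid_1_best_response_to_response_mix_iff[OF b lam v1] bounds
    by (simp add: payoff_return_pmf)
  moreover have "\<forall>k. bid_payoff 2 (return_pmf 1) k \<le> payoff 2 (response_mix b lam) (return_pmf 1)"
    unfolding u2 by (simp add: bid_payoff_return_pmf)
  ultimately show ?thesis
    using Y u1 u2 is_strategy_return_pmf by (simp add: nash_iff_no_better_bid)
qed

lemma nash_imp_response_mix: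
  assumes N: "nash v1 v2 X Y" and v1: "v1 > 0" and "mean X = 1" and "0 < mean Y" "mean Y < 1"
  shows "v2 = 2 \<and> X = return_pmf 1 \<and>
    (\<exists>lam. 0 \<le> lam \<and> lam \<le> 1 \<and>
      4 / (mean Y * v1) - 2 / mean Y + 1 \<le> lam \<and> lam \<le> 4 / (mean Y * v1) - 1 \<and>
      Y = response_mix (mean Y) lam)"
proof -
  have X: "X = return_pmf 1"
    using N nash_pmf_0_eq_0[OF N v1 assms(3,5)] eq_return_pmf_1_if_mean_1 assms(3)
    by (simp add: nash_def)
  with N have v2: "v2 = 2" and sub: "set_pmf Y \<subseteq> {..2}"
    using nash_against_return_pmf_1 assms(4,5) by auto
  define lam where "lam = pmf Y 1 / mean Y"
  have lam: "0 \<le> lam" "lam \<le> 1" and Y: "Y = response_mix (mean Y) lam"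
    using response_mix_if_support_le_2[OF sub assms(4,5)] by (simp_all add: lam_def)
  have "\<forall>k. bid_payoff v1 Y k \<le> bid_payoff v1 Y 1"
    using N X by (simp add: nash_iff_no_better_bid payoff_return_pmf)
  then have "4 / (mean Y * v1) - 2 / mean Y + 1 \<le> lam \<and> lam \<le> 4 / (mean Y * v1) - 1"
    using bid_1_best_response_to_response_mix_iff[OF assms(4) _ lam v1] assms(5) Y by simp
  with X v2 lam Y show ?thesis
    by blast
qed

theorem proposition4:
  fixes v1 v2 b :: real and X Y :: "nat pmf"
  assumes "v1 \<ge> v2" and "v2 > 0" and "0 < b" and "b < 1"
    and "is_strategy X" and "is_strategy Y"
    and "mean X = 1" and "mean Y = b"
  shows "(nash v1 v2 X Y \<longleftrightarrow>
            v2 = 2 \<and> b \<le> 4 / v1 \<and> X = U_O1 \<and>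
            (\<exists>lam. 0 \<le> lam \<and> lam \<le> 1 \<and>
                   4 / (b * v1) - 2 / b + 1 \<le> lam \<and> lam \<le> 4 / (b * v1) - 1 \<and>
                   Y = mix (1 - b) (return_pmf 0) (mix lam U_O1 U_E1)))
       \<and> (nash v1 v2 X Y \<longrightarrow>
            payoff v1 X Y = v1 / 2 * (2 - b) - 1 \<and> payoff v2 Y X = 0)"
proof -
  have v1: "v1 > 0"
    using assms(1,2) by linarith
  have b_le: "b \<le> 4 / v1" if "0 \<le> lam" "lam \<le> 4 / (b * v1) - 1" for lam
  proof -
    have "1 \<le> 4 / (b * v1)"
      using that by linarith
    then show ?thesis
      using assms(3) v1 by (simp add: field_simps)
  qed
  have suff: "nash v1 v2 X Y \<and> payoff v1 X Y = v1 / 2 * (2 - b) - 1 \<and> payoff v2 Y X = 0"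
    if "v2 = 2" "X = return_pmf 1" "0 \<le> lam" "lam \<le> 1" "4 / (b * v1) - 2 / b + 1 \<le> lam"
      "lam \<le> 4 / (b * v1) - 1" "Y = response_mix b lam" for lam
    using nash_response_mix[of b lam v1] that assms(3,4) v1 by simp
  show ?thesis
  proof (cases "nash v1 v2 X Y")
    case True
    then show ?thesis
      using nash_imp_response_mix[OF True v1 assms(7)] assms(3,4,8) suff b_le
      by (auto simp: U_O1_def response_mix_def)
  qed (use suff in \<open>auto simp: U_O1_def response_mix_def\<close>)
qed

end
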